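(* With probability $1-o(1)$ (as $n\to\infty$), $r=O\big((\log n)^\alpha\big)$.
   Context: All logarithms are base 2. Let $n$ be a large even integer and $V$ a set of $n$ vertices; $G$ is the random 10-regular multigraph on $V$ whose edges are the union of 10 independent uniformly random perfect matchings on $V$; $\mathrm{dist}_G$ is hop distance. Fix a small constant $\varepsilon>0$ and $\alpha=\frac{\log 5}{\log 5+1-\varepsilon}$. Let $T\subseteq V$ be an arbitrary set of $k=\lfloor n/2^{(\log n)^\alpha}\rfloor$ vertices (terminals). For $i\ge0$ let $B_i=\{u\in V:\min_{t\in T}\mathrm{dist}_G(u,t)\le i\}$. Let $m=\lfloor 10n/(\log n)^\alpha\rfloor$ and $r=\min\{i: |B_i|\ge 2m\}-1$. *)

theory Defs
  imports "HOL-Probability.Probability"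
begin

text \<open>Vertex set V = {0..<n}. A perfect matching on V is a fixed-point-free
involution of V; outside V it is the identity (to make the set finite).\<close>
definition perfect_matchings :: "nat \<Rightarrow> (nat \<Rightarrow> nat) set" where
  "perfect_matchings n = {f. (\<forall>x<n. f x < n \<and> f x \<noteq> x \<and> f (f x) = x) \<and> (\<forall>x\<ge>n. f x = x)}"

text \<open>The random 10-regular multigraph: 10 independent uniform perfect matchings,
i.e. the uniform distribution on 10-tuples of perfect matchings.\<close>
definition matching_tuples :: "nat \<Rightarrow> (nat \<Rightarrow> nat \<Rightarrow> nat) set" where
  "matching_tuples n = PiE {..<10} (\<lambda>_. perfect_matchings n)"

definition random_graph :: "nat \<Rightarrow> (nat \<Rightarrow> nat \<Rightarrow> nat) pmf" where
  "random_graph n = pmf_of_set (matching_tuples n)"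

definition edges :: "nat \<Rightarrow> (nat \<Rightarrow> nat \<Rightarrow> nat) \<Rightarrow> (nat \<times> nat) set" where
  "edges n M = {(u, v). u < n \<and> v < n \<and> (\<exists>i<10. M i u = v)}"

definition ball :: "nat \<Rightarrow> (nat \<Rightarrow> nat \<Rightarrow> nat) \<Rightarrow> nat set \<Rightarrow> nat \<Rightarrow> nat set" where
  "ball n M T i = {u. u < n \<and> (\<exists>t\<in>T. (t, u) \<in> (Id_on {..<n} \<union> edges n M) ^^ i)}"

definition alpha :: "real \<Rightarrow> real" where
  "alpha \<epsilon> = log 2 5 / (log 2 5 + 1 - \<epsilon>)"

definition num_terminals :: "real \<Rightarrow> nat \<Rightarrow> nat" where
  "num_terminals \<epsilon> n = nat \<lfloor>real n / 2 powr ((log 2 (real n)) powr alpha \<epsilon>)\<rfloor>"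

definition m_param :: "real \<Rightarrow> nat \<Rightarrow> nat" where
  "m_param \<epsilon> n = nat \<lfloor>10 * real n / (log 2 (real n)) powr alpha \<epsilon>\<rfloor>"

text \<open>r = min{i : |B_i| \<ge> 2m} - 1 (as an integer; only meaningful when some such i exists).\<close>
definition r_param :: "real \<Rightarrow> nat \<Rightarrow> (nat \<Rightarrow> nat \<Rightarrow> nat) \<Rightarrow> nat set \<Rightarrow> int" where
  "r_param \<epsilon> n M T = int (LEAST i. card (ball n M T i) \<ge> 2 * m_param \<epsilon> n) - 1"

end

(* Call a tuple of matchings an expander up to size s if every nonempty vertex set S with
   |S| <= s has a closed neighbourhood of at least 2|S| vertices. If this fails, some S is mapped
   by all ten matchings into a set U containing S with |U| = 2|S|. A uniform perfect matching maps
   S into U with probability at most (|U|/n)^(ceil(|S|/2)), so a union bound over the pairs (S, U)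
   bounds the failure probability by the sum over s of (216 s^2 / n^2)^s, which is O(m/n) =
   O((log n)^(-alpha)) for s <= 2m. On an expander the balls B_i double in size until they reach
   2m vertices; since |B_0| = k is about n / 2^L with L = (log n)^alpha, this happens within
   about L steps, so r <= L. *)

theory Submission
  imports Defs "HOL-Real_Asymp.Real_Asymp"
begin

definition perfect_matchings_on :: "'a set \<Rightarrow> ('a \<Rightarrow> 'a) set" where
  "perfect_matchings_on V =
     {f. (\<forall>x\<in>V. f x \<in> V \<and> f x \<noteq> x \<and> f (f x) = x) \<and> (\<forall>x. x \<notin> V \<longrightarrow> f x = x)}"

lemma perfect_matchings_eq_on_lessThan: "perfect_matchings n = perfect_matchings_on {..<n}"
  unfolding perfect_matchings_def perfect_matchings_on_def by auto

lemma finite_perfect_matchings_on: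
  assumes "finite V"
  shows "finite (perfect_matchings_on V)"
proof (rule finite_subset)
  show "perfect_matchings_on V \<subseteq> (\<lambda>g x. if x \<in> V then g x else x) ` (V \<rightarrow>\<^sub>E V)"
  proof
    fix f assume f: "f \<in> perfect_matchings_on V"
    then have "f = (\<lambda>x. if x \<in> V then restrict f V x else x)" and "restrict f V \<in> V \<rightarrow>\<^sub>E V"
      by (auto simp: perfect_matchings_on_def)
    then show "f \<in> (\<lambda>g x. if x \<in> V then g x else x) ` (V \<rightarrow>\<^sub>E V)" by blast
  qed
  show "finite ((\<lambda>g x. if x \<in> V then g x else x) ` (V \<rightarrow>\<^sub>E V))"
    using assms by (simp add: finite_PiE)
qed

lemma perfect_matching_on_avoids_pair:
  assumes "f \<in> perfect_matchings_on V" "x \<in> V" "z \<in> V" "z \<noteq> x" "z \<noteq> f x"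
  shows "f z \<noteq> x \<and> f z \<noteq> f x"
proof -
  have "f (f z) = z" "f (f x) = x" using assms(1-3) unfolding perfect_matchings_on_def by auto
  then show ?thesis using assms(4,5) by metis
qed

lemma bij_betw_perfect_matchings_on_remove_pair:
  assumes x: "x \<in> V" and y: "y \<in> V" "y \<noteq> x"
  shows "bij_betw (\<lambda>f. f(x := x, y := y)) {f \<in> perfect_matchings_on V. f x = y}
           (perfect_matchings_on (V - {x, y}))"
proof (rule bij_betwI[where g = "\<lambda>g. g(x := y, y := x)"])
  show "(\<lambda>f. f(x := x, y := y)) \<in> {f \<in> perfect_matchings_on V. f x = y} \<rightarrow> perfect_matchings_on (V - {x, y})"
  proof
    fix f assume f: "f \<in> {f \<in> perfect_matchings_on V. f x = y}"
    then have "f z \<noteq> x \<and> f z \<noteq> y" if "z \<in> V - {x, y}" for z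
      using perfect_matching_on_avoids_pair[of f V x z] x that by auto
    then show "f(x := x, y := y) \<in> perfect_matchings_on (V - {x, y})"
      using f unfolding perfect_matchings_on_def by auto
  qed
  show "(\<lambda>g. g(x := y, y := x)) \<in> perfect_matchings_on (V - {x, y}) \<rightarrow> {f \<in> perfect_matchings_on V. f x = y}"
    using x y unfolding perfect_matchings_on_def by auto
  show "f(x := x, y := y, x := y, y := x) = f" if "f \<in> {f \<in> perfect_matchings_on V. f x = y}" for f
    using that x unfolding perfect_matchings_on_def by (auto simp: fun_eq_iff)
  show "g(x := y, y := x, x := x, y := y) = g" if "g \<in> perfect_matchings_on (V - {x, y})" for g
    using that unfolding perfect_matchings_on_def by (auto simp: fun_eq_iff)
qed

fun perfect_matching_count :: "nat \<Rightarrow> nat" where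
  "perfect_matching_count 0 = 1"
| "perfect_matching_count (Suc 0) = 0"
| "perfect_matching_count (Suc (Suc k)) = Suc k * perfect_matching_count k"

lemma perfect_matching_count_rec:
  "1 \<le> k \<Longrightarrow> perfect_matching_count k = (k - 1) * perfect_matching_count (k - 2)"
  by (cases k rule: perfect_matching_count.cases) auto

lemma card_perfect_matchings_on:
  "finite V \<Longrightarrow> card (perfect_matchings_on V) = perfect_matching_count (card V)"
proof (induction "card V" arbitrary: V rule: less_induct)
  case less
  show ?case
  proof (cases "V = {}")
    case True
    then have "perfect_matchings_on V = {id}" by (auto simp: perfect_matchings_on_def)
    then show ?thesis using True by simp
  next
    case False
    then obtain x where x: "x \<in> V" by blast
    have card_V: "1 \<le> card V" using False less.prems by (simp add: Suc_le_eq card_gt_0_iff)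
    have partner: "card {f \<in> perfect_matchings_on V. f x = y} = perfect_matching_count (card V - 2)"
      if y: "y \<in> V - {x}" for y
    proof -
      have card_Vxy: "card (V - {x, y}) = card V - 2"
        using x y less.prems by (auto simp: card_Diff_subset card_insert_if)
      have "card {f \<in> perfect_matchings_on V. f x = y} = card (perfect_matchings_on (V - {x, y}))"
        using bij_betw_same_card[OF bij_betw_perfect_matchings_on_remove_pair] x y by auto
      also have "\<dots> = perfect_matching_count (card V - 2)"
        using less.hyps[of "V - {x, y}"] less.prems card_Vxy card_V by simp
      finally show ?thesis .
    qed
    have "card (perfect_matchings_on V) = card (\<Union>y\<in>V - {x}. {f \<in> perfect_matchings_on V. f x = y})"
      using x by (intro arg_cong[where f = card]) (auto simp: perfect_matchings_on_def)
    also have "\<dots> = (\<Sum>y\<in>V - {x}. card {f \<in> perfect_matchings_on V. f x = y})"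
      using less.prems by (intro card_UN_disjoint) (auto simp: finite_perfect_matchings_on)
    also have "\<dots> = (card V - 1) * perfect_matching_count (card V - 2)"
      using partner x less.prems by simp
    also have "\<dots> = perfect_matching_count (card V)"
      using perfect_matching_count_rec[OF card_V] by simp
    finally show ?thesis .
  qed
qed

lemma card_matchings_into_remove_pair_le:
  assumes "finite V" "S \<subseteq> V" "x \<in> V" "y \<in> V" "y \<noteq> x"
  shows "card {f \<in> perfect_matchings_on V. f x = y \<and> f ` S \<subseteq> U}
         \<le> card {g \<in> perfect_matchings_on (V - {x, y}). g ` (S - {x, y}) \<subseteq> U - {x, y}}"
proof (rule card_inj_on_le)
  note bij = bij_betw_perfect_matchings_on_remove_pair[OF assms(3-5)]
  show "inj_on (\<lambda>f. f(x := x, y := y)) {f \<in> perfect_matchings_on V. f x = y \<and> f ` S \<subseteq> U}"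
    using bij_betw_imp_inj_on[OF bij] by (rule inj_on_subset) auto
  show "(\<lambda>f. f(x := x, y := y)) ` {f \<in> perfect_matchings_on V. f x = y \<and> f ` S \<subseteq> U}
        \<subseteq> {g \<in> perfect_matchings_on (V - {x, y}). g ` (S - {x, y}) \<subseteq> U - {x, y}}"
  proof (rule image_subsetI)
    fix f assume "f \<in> {f \<in> perfect_matchings_on V. f x = y \<and> f ` S \<subseteq> U}"
    then have f: "f \<in> perfect_matchings_on V" "f x = y" "f ` S \<subseteq> U" by auto
    have "f z \<noteq> x \<and> f z \<noteq> y" if "z \<in> S - {x, y}" for z
      using perfect_matching_on_avoids_pair[of f V x z] f assms(2,3) that by auto
    then have "(f(x := x, y := y)) ` (S - {x, y}) \<subseteq> U - {x, y}"
      using f by auto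
    moreover have "f(x := x, y := y) \<in> perfect_matchings_on (V - {x, y})"
      using bij_betwE[OF bij] f by auto
    ultimately show "f(x := x, y := y)
        \<in> {g \<in> perfect_matchings_on (V - {x, y}). g ` (S - {x, y}) \<subseteq> U - {x, y}}" by blast
  qed
  show "finite {g \<in> perfect_matchings_on (V - {x, y}). g ` (S - {x, y}) \<subseteq> U - {x, y}}"
    using assms(1) by (simp add: finite_perfect_matchings_on)
qed

lemma power_ratio_le_shifted:
  fixes a b :: real
  assumes "0 \<le> a" "a \<le> b" "h - 1 \<le> h'"
  shows "(a / b) ^ h' \<le> ((a + 2) / (b + 2)) ^ (h - 1)"
proof -
  have "0 \<le> a / b" "a / b \<le> 1" using assms by (auto simp: divide_le_eq_1)
  then have "(a / b) ^ h' \<le> (a / b) ^ (h - 1)" by (rule power_decreasing[OF assms(3)])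
  also have "\<dots> \<le> ((a + 2) / (b + 2)) ^ (h - 1)"
  proof (rule power_mono)
    show "a / b \<le> (a + 2) / (b + 2)"
      using assms by (cases "b = 0") (auto simp: field_simps)
  qed (use \<open>0 \<le> a / b\<close> in auto)
  finally show ?thesis .
qed

lemma pred_mult_power_ratio_le:
  fixes u v :: real
  assumes "1 \<le> u" "u \<le> v" "1 \<le> h"
  shows "(u - 1) * (u / v) ^ (h - 1) \<le> (v - 1) * (u / v) ^ h"
proof -
  have "u - 1 \<le> (v - 1) * (u / v)" using assms by (simp add: field_simps)
  then have "(u - 1) * (u / v) ^ (h - 1) \<le> (v - 1) * (u / v) * (u / v) ^ (h - 1)"
    using assms by (intro mult_right_mono) auto
  also have "\<dots> = (v - 1) * (u / v) ^ h"
    using assms(3) by (simp add: power_eq_if)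
  finally show ?thesis .
qed

lemma card_remove_pair:
  assumes "finite A" "x \<in> A" "y \<in> A" "x \<noteq> y"
  shows "card (A - {x, y}) + 2 = card A"
proof -
  have "card {x, y} \<le> card A" using assms by (intro card_mono) auto
  then show ?thesis using assms by (simp add: card_Diff_subset)
qed

lemma card_matchings_into_partner_le:
  assumes V: "finite V" "S \<subseteq> U" "U \<subseteq> V" and x: "x \<in> S" and y: "y \<in> U - {x}"
    and rest: "real (card {g \<in> perfect_matchings_on (V - {x, y}). g ` (S - {x, y}) \<subseteq> U - {x, y}})
      \<le> (real (card (U - {x, y})) / real (card (V - {x, y}))) ^ ((card (S - {x, y}) + 1) div 2)
         * real (card (perfect_matchings_on (V - {x, y})))"
  shows "real (card {f \<in> perfect_matchings_on V. f x = y \<and> f ` S \<subseteq> U})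
         \<le> (real (card U) / real (card V)) ^ ((card S + 1) div 2 - 1)
            * real (perfect_matching_count (card V - 2))"
proof -
  have "finite U" using finite_subset[OF V(3,1)] .
  have xy: "x \<in> U" "y \<in> U" "x \<in> V" "y \<in> V" "x \<noteq> y" using x y V by auto
  have pairs: "card (U - {x, y}) + 2 = card U" "card (V - {x, y}) + 2 = card V"
    using card_remove_pair[OF \<open>finite U\<close> xy(1,2,5)] card_remove_pair[OF V(1) xy(3-5)] .
  have "real (card (U - {x, y}) + 2) = real (card U)" "real (card (V - {x, y}) + 2) = real (card V)"
    by (simp_all only: pairs)
  then have card_U: "real (card (U - {x, y})) + 2 = real (card U)"
    and card_V: "real (card (V - {x, y})) + 2 = real (card V)"
    by (simp_all only: of_nat_add of_nat_numeral)
  have "card S \<le> card (S - {x, y}) + 2"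
    using diff_card_le_card_Diff[of "{x, y}" S] xy(5) by simp
  then have h: "(card S + 1) div 2 - 1 \<le> (card (S - {x, y}) + 1) div 2" by linarith
  have UV: "real (card (U - {x, y})) \<le> real (card (V - {x, y}))"
    using card_mono[of "V - {x, y}" "U - {x, y}"] V by auto
  have "real (card {f \<in> perfect_matchings_on V. f x = y \<and> f ` S \<subseteq> U})
        \<le> real (card {g \<in> perfect_matchings_on (V - {x, y}). g ` (S - {x, y}) \<subseteq> U - {x, y}})"
    using card_matchings_into_remove_pair_le[of V S x y U] V x y by auto
  also have "\<dots> \<le> (real (card U) / real (card V)) ^ ((card S + 1) div 2 - 1)
                   * real (perfect_matching_count (card V - 2))"
  proof (rule order_trans[OF rest mult_mono])
    show "(real (card (U - {x, y})) / real (card (V - {x, y}))) ^ ((card (S - {x, y}) + 1) div 2)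
          \<le> (real (card U) / real (card V)) ^ ((card S + 1) div 2 - 1)"
      using power_ratio_le_shifted[OF _ UV h] unfolding card_U card_V by simp
    show "real (card (perfect_matchings_on (V - {x, y}))) \<le> real (perfect_matching_count (card V - 2))"
      using card_perfect_matchings_on[of "V - {x, y}"] V(1) by (simp flip: pairs(2))
  qed auto
  finally show ?thesis .
qed

text \<open>The partner of a point x of S is one of the |U| - 1 other points of U, and removing x and
  its partner from V costs S at most two points.\<close>
lemma card_matchings_into_le:
  assumes "finite V" "S \<subseteq> U" "U \<subseteq> V"
  shows "real (card {f \<in> perfect_matchings_on V. f ` S \<subseteq> U})
         \<le> (real (card U) / real (card V)) ^ ((card S + 1) div 2) * real (card (perfect_matchings_on V))"
  using assms
proof (induction "card V" arbitrary: V S U rule: less_induct)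
  case less
  show ?case
  proof (cases "S = {}")
    case True
    then show ?thesis by simp
  next
    case False
    then obtain x where "x \<in> S" by blast
    then have x: "x \<in> U" "x \<in> V" using less.prems by auto
    have finite_U: "finite U" "finite S" using less.prems finite_subset by metis+
    define h where "h = (card S + 1) div 2"
    define u where "u = real (card U)"
    define v where "v = real (card V)"
    define c where "c = real (perfect_matching_count (card V - 2))"
    have h: "1 \<le> h" using False finite_U unfolding h_def by (simp add: Suc_le_eq card_gt_0_iff)
    have u: "1 \<le> u" "u \<le> v"
      using x finite_U card_mono[OF less.prems(1,3)] unfolding u_def v_def
      by (auto simp: Suc_le_eq card_gt_0_iff)
    have partner: "real (card {f \<in> perfect_matchings_on V. f x = y \<and> f ` S \<subseteq> U}) \<le> (u / v) ^ (h - 1) * c"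
      if "y \<in> U - {x}" for y
      unfolding u_def v_def h_def c_def
    proof (rule card_matchings_into_partner_le[OF less.prems \<open>x \<in> S\<close> that], rule less.hyps)
      show "card (V - {x, y}) < card V" using that less.prems x by (auto intro: psubset_card_mono)
    qed (use less.prems in auto)
    have "{f \<in> perfect_matchings_on V. f ` S \<subseteq> U}
          = (\<Union>y\<in>U - {x}. {f \<in> perfect_matchings_on V. f x = y \<and> f ` S \<subseteq> U})"
      using \<open>x \<in> S\<close> x by (auto simp: perfect_matchings_on_def image_subset_iff)
    then have "card {f \<in> perfect_matchings_on V. f ` S \<subseteq> U}
               \<le> (\<Sum>y\<in>U - {x}. card {f \<in> perfect_matchings_on V. f x = y \<and> f ` S \<subseteq> U})"
      using card_UN_le[of "U - {x}"] finite_U by simp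
    then have "real (card {f \<in> perfect_matchings_on V. f ` S \<subseteq> U})
               \<le> (\<Sum>y\<in>U - {x}. real (card {f \<in> perfect_matchings_on V. f x = y \<and> f ` S \<subseteq> U}))"
      by (simp flip: of_nat_sum)
    also have "\<dots> \<le> (\<Sum>y\<in>U - {x}. (u / v) ^ (h - 1) * c)"
      by (rule sum_mono) (rule partner)
    also have "\<dots> = (u - 1) * (u / v) ^ (h - 1) * c"
      using card_Diff_singleton[OF x(1)] u(1) unfolding u_def by simp
    also have "\<dots> \<le> (v - 1) * (u / v) ^ h * c"
      using pred_mult_power_ratio_le[OF u h] unfolding c_def by (intro mult_right_mono) auto
    also have "\<dots> = (u / v) ^ h * real (card (perfect_matchings_on V))"
      using card_perfect_matchings_on[OF less.prems(1)] perfect_matching_count_rec[of "card V"] u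
      unfolding v_def c_def by simp
    finally show ?thesis unfolding h_def u_def v_def .
  qed
qed

lemma power_self_le_three_power_fact: "real s ^ s \<le> 3 ^ s * fact s"
proof (induction s)
  case 0
  then show ?case by simp
next
  case (Suc s)
  have "real (Suc s) ^ s \<le> 3 * real s ^ s"
  proof (cases "s = 0")
    case False
    have "real (Suc s) ^ s / real s ^ s = (1 + 1 / real s) ^ s"
      using False by (simp add: field_simps)
    also have "\<dots> \<le> exp 1"
      using False by (intro exp_ge_one_plus_x_over_n_power_n) auto
    also have "\<dots> \<le> 3" by (rule exp_le)
    finally show ?thesis using False by (simp add: field_simps)
  qed simp
  then have "real (Suc s) ^ Suc s \<le> real (Suc s) * (3 * real s ^ s)"
    by (simp add: mult_left_mono)
  also have "\<dots> \<le> real (Suc s) * (3 * (3 ^ s * fact s))"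
    using Suc.IH by (intro mult_left_mono) auto
  also have "\<dots> = 3 ^ Suc s * fact (Suc s)" by (simp add: algebra_simps)
  finally show ?case .
qed

lemma binomial_le_power:
  assumes "1 \<le> k"
  shows "real (n choose k) \<le> (3 * real n / real k) ^ k"
proof -
  have choose_fact: "real (n choose k) * fact k \<le> real n ^ k"
    using binomial_fact_pow[of n k] by (metis of_nat_fact of_nat_le_iff of_nat_mult of_nat_power)
  have "real (n choose k) * real k ^ k \<le> real (n choose k) * (3 ^ k * fact k)"
    using power_self_le_three_power_fact[of k] by (intro mult_left_mono) auto
  also have "\<dots> = 3 ^ k * (real (n choose k) * fact k)" by simp
  also have "\<dots> \<le> 3 ^ k * real n ^ k"
    using choose_fact by (intro mult_left_mono) auto
  finally show ?thesis
    using assms by (simp add: power_divide power_mult_distrib pos_le_divide_eq)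
qed

lemma choose_mult_choose_mult_power_le:
  assumes "1 \<le> s" "2 * s \<le> n"
  shows "real (n choose s) * real (n choose (2 * s)) * (real (2 * s) / real n) ^ (10 * ((s + 1) div 2))
         \<le> (216 * real s ^ 2 / real n ^ 2) ^ s"
proof -
  have n: "0 < real n" using assms by simp
  have "(real (2 * s) / real n) ^ (10 * ((s + 1) div 2)) \<le> (real (2 * s) / real n) ^ (5 * s)"
    using assms by (intro power_decreasing) auto
  then have "real (n choose s) * real (n choose (2 * s)) * (real (2 * s) / real n) ^ (10 * ((s + 1) div 2))
        \<le> (3 * real n / real s) ^ s * (3 * real n / real (2 * s)) ^ (2 * s) * (real (2 * s) / real n) ^ (5 * s)"
    using assms by (intro mult_mono binomial_le_power) auto
  also have "\<dots> = ((3 * real n / real s) * (3 * real n / real (2 * s)) ^ 2 * (real (2 * s) / real n) ^ 5) ^ s"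
    by (simp only: power_mult power_mult_distrib)
  also have "(3 * real n / real s) * (3 * real n / real (2 * s)) ^ 2 * (real (2 * s) / real n) ^ 5
             = 216 * real s ^ 2 / real n ^ 2"
    using assms n by (simp add: field_simps power2_eq_square power_def)
  finally show ?thesis .
qed

lemma geometric_sum_from_one_le:
  fixes q :: real
  assumes "0 \<le> q" "q \<le> 1/2"
  shows "(\<Sum>s\<in>{1..N}. q ^ s) \<le> 2 * q"
proof -
  have "(\<Sum>s\<in>{1..N}. q ^ s) = q * (\<Sum>s<N. q ^ s)"
    using sum.atLeast1_atMost_eq[of "power q" N] by (simp add: sum_distrib_left)
  also have "\<dots> \<le> q * 2"
  proof (rule mult_left_mono)
    have "(\<Sum>s<N. q ^ s) \<le> (\<Sum>s. q ^ s)"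
      using assms by (intro sum_le_suminf summable_geometric) auto
    also have "\<dots> = 1 / (1 - q)" using assms by (simp add: suminf_geometric)
    also have "\<dots> \<le> 2" using assms by (simp add: field_simps)
    finally show "(\<Sum>s<N. q ^ s) \<le> 2" .
  qed (use assms in auto)
  finally show ?thesis by simp
qed

lemma finite_matching_tuples: "finite (matching_tuples n)"
  unfolding matching_tuples_def perfect_matchings_eq_on_lessThan
  by (intro finite_PiE finite_perfect_matchings_on) auto

lemma matching_tuples_nonempty:
  assumes "even n"
  shows "matching_tuples n \<noteq> {}"
proof -
  define f where "f x = (if x < n then (if even x then x + 1 else x - 1) else x)" for x :: nat
  have "x + 1 < n" if "x < n" "even x" for x
    using that assms by (metis Suc_eq_plus1 Suc_lessI even_Suc)
  then have "f \<in> perfect_matchings n"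
    unfolding perfect_matchings_def f_def by (auto elim: oddE)
  then show ?thesis unfolding matching_tuples_def by (auto simp: PiE_eq_empty_iff)
qed

definition tuples_mapping_into :: "nat \<Rightarrow> nat set \<Rightarrow> nat set \<Rightarrow> (nat \<Rightarrow> nat \<Rightarrow> nat) set" where
  "tuples_mapping_into n S U = {M \<in> matching_tuples n. \<forall>i<10. M i ` S \<subseteq> U}"

lemma card_tuples_mapping_into_le:
  assumes "S \<subseteq> U" "U \<subseteq> {..<n}"
  shows "real (card (tuples_mapping_into n S U))
         \<le> (real (card U) / real n) ^ (10 * ((card S + 1) div 2)) * real (card (matching_tuples n))"
proof -
  let ?P = "perfect_matchings_on {..<n :: nat}"
  have "tuples_mapping_into n S U = {..<10} \<rightarrow>\<^sub>E {f \<in> ?P. f ` S \<subseteq> U}"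
    unfolding tuples_mapping_into_def matching_tuples_def perfect_matchings_eq_on_lessThan
    by (auto simp: PiE_iff extensional_def image_subset_iff)
  then have "real (card (tuples_mapping_into n S U)) = real (card {f \<in> ?P. f ` S \<subseteq> U}) ^ 10"
    by (simp add: card_PiE)
  also have "\<dots> \<le> ((real (card U) / real n) ^ ((card S + 1) div 2) * real (card ?P)) ^ 10"
    using card_matchings_into_le[of "{..<n}" S U] assms by (intro power_mono) auto
  also have "\<dots> = (real (card U) / real n) ^ (10 * ((card S + 1) div 2)) * real (card (matching_tuples n))"
    unfolding matching_tuples_def perfect_matchings_eq_on_lessThan
    by (simp add: card_PiE power_mult_distrib mult.commute[of 10] power_mult)
  finally show ?thesis .
qed

definition traps :: "nat \<Rightarrow> nat \<Rightarrow> (nat set \<times> nat set) set" where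
  "traps n s = {(S, U). S \<subseteq> U \<and> U \<subseteq> {..<n} \<and> card S = s \<and> card U = 2 * s}"

definition trapped_tuples :: "nat \<Rightarrow> nat \<Rightarrow> (nat \<Rightarrow> nat \<Rightarrow> nat) set" where
  "trapped_tuples n smax = (\<Union>s\<in>{1..smax}. \<Union>(S, U)\<in>traps n s. tuples_mapping_into n S U)"

lemma finite_traps: "finite (traps n s)"
  by (rule finite_subset[of _ "Pow {..<n} \<times> Pow {..<n}"]) (auto simp: traps_def)

lemma card_traps_le: "card (traps n s) \<le> (n choose s) * (n choose (2 * s))"
proof -
  have "traps n s \<subseteq> {S. S \<subseteq> {..<n} \<and> card S = s} \<times> {U. U \<subseteq> {..<n} \<and> card U = 2 * s}"
    unfolding traps_def by auto
  then have "card (traps n s) \<le> card ({S. S \<subseteq> {..<n} \<and> card S = s} \<times> {U. U \<subseteq> {..<n} \<and> card U = 2 * s})"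
    by (intro card_mono) auto
  then show ?thesis by (simp add: card_cartesian_product n_subsets)
qed

lemma card_trapped_tuples_of_size_le:
  assumes "1 \<le> s" "2 * s \<le> n"
  shows "(\<Sum>(S, U)\<in>traps n s. real (card (tuples_mapping_into n S U)))
         \<le> (216 * real s ^ 2 / real n ^ 2) ^ s * real (card (matching_tuples n))"
proof -
  define bound where "bound = (real (2 * s) / real n) ^ (10 * ((s + 1) div 2)) * real (card (matching_tuples n))"
  have "(\<Sum>(S, U)\<in>traps n s. real (card (tuples_mapping_into n S U))) \<le> (\<Sum>(S, U)\<in>traps n s. bound)"
  proof (intro sum_mono, clarify)
    fix S U assume "(S, U) \<in> traps n s"
    then have "S \<subseteq> U" "U \<subseteq> {..<n}" "card S = s" "real (card U) = real (2 * s)"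
      unfolding traps_def by auto
    then show "real (card (tuples_mapping_into n S U)) \<le> bound"
      using card_tuples_mapping_into_le[of S U n] unfolding bound_def by simp
  qed
  also have "\<dots> \<le> real (n choose s) * real (n choose (2 * s)) * bound"
    using card_traps_le[of n s] unfolding bound_def
    by (simp add: case_prod_unfold mult_right_mono flip: of_nat_mult)
  also have "\<dots> \<le> (216 * real s ^ 2 / real n ^ 2) ^ s * real (card (matching_tuples n))"
    using choose_mult_choose_mult_power_le[OF assms] unfolding bound_def mult.assoc[symmetric]
    by (intro mult_right_mono) auto
  finally show ?thesis .
qed

lemma card_trapped_tuples_le:
  assumes "2 * smax \<le> n" "216 * real smax / real n \<le> 1/2"
  shows "real (card (trapped_tuples n smax)) \<le> 2 * (216 * real smax / real n) * real (card (matching_tuples n))"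
proof -
  define q where "q = 216 * real smax / real n"
  have "card (trapped_tuples n smax) \<le> (\<Sum>s\<in>{1..smax}. \<Sum>(S, U)\<in>traps n s. card (tuples_mapping_into n S U))"
    unfolding trapped_tuples_def
    by (intro card_UN_le[THEN order_trans] sum_mono card_UN_le) (auto simp: case_prod_unfold finite_traps)
  then have "real (card (trapped_tuples n smax))
             \<le> (\<Sum>s\<in>{1..smax}. \<Sum>(S, U)\<in>traps n s. real (card (tuples_mapping_into n S U)))"
    by (simp add: case_prod_unfold flip: of_nat_sum)
  also have "\<dots> \<le> (\<Sum>s\<in>{1..smax}. q ^ s * real (card (matching_tuples n)))"
  proof (intro sum_mono order_trans[OF card_trapped_tuples_of_size_le])
    fix s assume s: "s \<in> {1..smax}"
    have "real s ^ 2 \<le> real smax * real n"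
      using s assms(1) unfolding power2_eq_square by (intro mult_mono) auto
    then have "216 * real s ^ 2 / real n ^ 2 \<le> q"
      using s assms(1) unfolding q_def by (simp add: field_simps power2_eq_square)
    then show "(216 * real s ^ 2 / real n ^ 2) ^ s * real (card (matching_tuples n))
               \<le> q ^ s * real (card (matching_tuples n))"
      by (intro mult_right_mono power_mono) auto
  qed (use assms in auto)
  also have "\<dots> \<le> 2 * q * real (card (matching_tuples n))"
    using geometric_sum_from_one_le[of q smax] assms(2) unfolding q_def sum_distrib_right[symmetric]
    by (intro mult_right_mono) auto
  finally show ?thesis unfolding q_def .
qed

definition closed_nbh :: "nat \<Rightarrow> (nat \<Rightarrow> nat \<Rightarrow> nat) \<Rightarrow> nat set \<Rightarrow> nat set" where
  "closed_nbh n M S = {u. \<exists>w\<in>S. (w, u) \<in> Id_on {..<n} \<union> edges n M}"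

lemma closed_nbh_subset: "closed_nbh n M S \<subseteq> {..<n}"
  unfolding closed_nbh_def edges_def by auto

lemma subset_closed_nbh: "S \<subseteq> {..<n} \<Longrightarrow> S \<subseteq> closed_nbh n M S"
  unfolding closed_nbh_def by auto

lemma matching_image_subset_closed_nbh:
  assumes "M \<in> matching_tuples n" "S \<subseteq> {..<n}" "i < 10"
  shows "M i ` S \<subseteq> closed_nbh n M S"
proof -
  have "M i \<in> perfect_matchings n" using assms(1,3) unfolding matching_tuples_def by auto
  then have "M i w < n" if "w \<in> S" for w using assms(2) that unfolding perfect_matchings_def by auto
  then show ?thesis using assms(2,3) unfolding closed_nbh_def edges_def by auto
qed

lemma ball_subset: "ball n M T i \<subseteq> {..<n}"
  unfolding ball_def by auto

lemma ball_0: "T \<subseteq> {..<n} \<Longrightarrow> ball n M T 0 = T"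
  unfolding ball_def by auto

lemma ball_Suc: "ball n M T (Suc i) = closed_nbh n M (ball n M T i)"
  unfolding ball_def closed_nbh_def by (auto simp: edges_def Id_on_def relcomp_unfold)

definition expands_small_sets :: "nat \<Rightarrow> (nat \<Rightarrow> nat \<Rightarrow> nat) \<Rightarrow> nat \<Rightarrow> bool" where
  "expands_small_sets n M smax \<longleftrightarrow>
     (\<forall>S. S \<subseteq> {..<n} \<and> 0 < card S \<and> card S \<le> smax \<longrightarrow> 2 * card S \<le> card (closed_nbh n M S))"

lemma expands_small_sets_if_not_trapped:
  assumes M: "M \<in> matching_tuples n" "M \<notin> trapped_tuples n smax" and "2 * smax \<le> n"
  shows "expands_small_sets n M smax"
  unfolding expands_small_sets_def
proof (intro allI impI, elim conjE, rule ccontr)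
  fix S assume S: "S \<subseteq> {..<n}" "0 < card S" "card S \<le> smax"
    and "\<not> 2 * card S \<le> card (closed_nbh n M S)"
  then obtain U where U: "closed_nbh n M S \<subseteq> U" "U \<subseteq> {..<n}" "card U = 2 * card S"
    using exists_subset_between[of "closed_nbh n M S" "2 * card S" "{..<n}"] closed_nbh_subset assms(3)
    by auto
  have "(S, U) \<in> traps n (card S)"
    using U subset_closed_nbh[OF S(1), of M] unfolding traps_def by auto
  moreover have "M \<in> tuples_mapping_into n S U"
    using M(1) matching_image_subset_closed_nbh[OF M(1) S(1)] U(1)
    unfolding tuples_mapping_into_def by auto
  moreover have "card S \<in> {1..smax}" using S(2,3) by simp
  ultimately have "M \<in> trapped_tuples n smax"
    unfolding trapped_tuples_def by (intro UN_I[of "card S"] UN_I[of "(S, U)"]) simp_all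
  then show False using M(2) by contradiction
qed

lemma card_ball_ge:
  assumes "expands_small_sets n M smax" "T \<subseteq> {..<n}" "T \<noteq> {}"
  shows "min smax (2 ^ i * card T) \<le> card (ball n M T i)"
proof (induction i)
  case 0
  then show ?case using ball_0[OF assms(2)] by simp
next
  case (Suc i)
  have card_T: "0 < card T" using assms(2,3) finite_subset by (auto simp: card_gt_0_iff)
  have finite_nbh: "finite (closed_nbh n M (ball n M T i))"
    using finite_subset[OF closed_nbh_subset] by blast
  show ?case
  proof (cases "smax \<le> card (ball n M T i)")
    case True
    have "card (ball n M T i) \<le> card (ball n M T (Suc i))"
      unfolding ball_Suc by (intro card_mono finite_nbh subset_closed_nbh ball_subset)
    then show ?thesis using True by linarith
  next
    case False
    then have "2 ^ i * card T \<le> card (ball n M T i)" using Suc.IH by simp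
    moreover have "0 < 2 ^ i * card T" using card_T by simp
    ultimately have "0 < card (ball n M T i)" "card (ball n M T i) \<le> smax" using False by linarith+
    then have "2 * card (ball n M T i) \<le> card (ball n M T (Suc i))"
      using assms(1) ball_subset unfolding expands_small_sets_def ball_Suc by blast
    then show ?thesis using \<open>2 ^ i * card T \<le> card (ball n M T i)\<close> by simp
  qed
qed

lemma prob_expands_small_sets_ge:
  assumes "even n" "2 * smax \<le> n" "216 * real smax / real n \<le> 1/2"
  shows "1 - 2 * (216 * real smax / real n)
         \<le> measure_pmf.prob (random_graph n) {M. expands_small_sets n M smax}"
proof -
  let ?\<Omega> = "matching_tuples n"
  let ?bad = "{M. \<not> expands_small_sets n M smax}"
  have \<Omega>: "finite ?\<Omega>" "?\<Omega> \<noteq> {}" using finite_matching_tuples matching_tuples_nonempty assms(1) by auto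
  have "?\<Omega> \<inter> ?bad \<subseteq> trapped_tuples n smax"
    using expands_small_sets_if_not_trapped assms(2) by blast
  moreover have "trapped_tuples n smax \<subseteq> ?\<Omega>"
    unfolding trapped_tuples_def tuples_mapping_into_def by auto
  ultimately have "card (?\<Omega> \<inter> ?bad) \<le> card (trapped_tuples n smax)"
    using \<Omega>(1) by (intro card_mono) (auto intro: finite_subset)
  then have "measure_pmf.prob (random_graph n) ?bad \<le> real (card (trapped_tuples n smax)) / card ?\<Omega>"
    unfolding random_graph_def measure_pmf_of_set[OF \<Omega>(2,1)] by (intro divide_right_mono) auto
  also have "\<dots> \<le> 2 * (216 * real smax / real n)"
    using card_trapped_tuples_le[OF assms(2,3)] \<Omega> by (simp add: divide_le_eq card_gt_0_iff)
  finally have bad: "measure_pmf.prob (random_graph n) ?bad \<le> 2 * (216 * real smax / real n)" .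
  have "UNIV - ?bad = {M. expands_small_sets n M smax}" by auto
  then have "measure_pmf.prob (random_graph n) {M. expands_small_sets n M smax}
             = 1 - measure_pmf.prob (random_graph n) ?bad"
    using measure_pmf.prob_compl[of ?bad "random_graph n"] by simp
  then show ?thesis using bad by simp
qed

lemma Least_card_ball_le:
  assumes "expands_small_sets n M smax" "T \<subseteq> {..<n}" "T \<noteq> {}" "smax \<le> 2 ^ i * card T"
  shows "smax \<le> card (ball n M T i)" "(LEAST j. smax \<le> card (ball n M T j)) \<le> i"
proof -
  show "smax \<le> card (ball n M T i)"
    using card_ball_ge[OF assms(1-3), of i] assms(4) by simp
  then show "(LEAST j. smax \<le> card (ball n M T j)) \<le> i" by (rule Least_le)
qed

lemma nat_floor_ge_half:
  fixes y :: real
  assumes "2 \<le> y"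
  shows "1 \<le> nat \<lfloor>y\<rfloor>" "y \<le> 2 * real (nat \<lfloor>y\<rfloor>)"
  using assms by linarith+

text \<open>The sizes used in the theorem, with L standing for (log n)^alpha: k = card T terminals,
  target size 2m for the balls, and \<lceil>L\<rceil> doubling steps.\<close>
lemma radius_parameter_bounds:
  fixes L :: real
  assumes "8640 \<le> L" "2 powr (L + 1) \<le> real n"
    and k: "k = nat \<lfloor>real n / 2 powr L\<rfloor>" and m: "m = nat \<lfloor>10 * real n / L\<rfloor>"
  shows "1 \<le> k" "2 * (2 * m) \<le> n" "2 * m \<le> 2 ^ nat \<lceil>L\<rceil> * k"
    and "216 * real (2 * m) / real n \<le> 1 / 2" "2 * (216 * real (2 * m) / real n) \<le> 8640 / L"
proof -
  have n: "0 < real n" using assms(2) powr_gt_zero[of 2 "L + 1"] by linarith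
  have "2 \<le> real n / 2 powr L" using assms(2) by (simp add: powr_add field_simps)
  then have "1 \<le> k" and k_ge: "real n \<le> 2 * 2 powr L * real k"
    using nat_floor_ge_half[of "real n / 2 powr L"] unfolding k by (auto simp: field_simps)
  then show "1 \<le> k" by simp
  have m_le: "real m \<le> 10 * real n / L" using assms(1) n unfolding m by simp
  have "real (4 * m) \<le> 40 * real n / L" using m_le by simp
  also have "\<dots> \<le> real n" using assms(1) n by (simp add: field_simps)
  finally show m_small: "2 * (2 * m) \<le> n" by linarith
  show prob_bound: "2 * (216 * real (2 * m) / real n) \<le> 8640 / L"
    using m_le assms(1) n by (simp add: field_simps)
  have "8640 / L \<le> 1" using assms(1) by simp
  then show "216 * real (2 * m) / real n \<le> 1 / 2" using prob_bound by linarith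
  have "L \<le> real (nat \<lceil>L\<rceil>)" by linarith
  then have "2 powr L \<le> 2 ^ nat \<lceil>L\<rceil>" by (simp add: powr_realpow[symmetric])
  have "real (2 * m) \<le> 2 powr L * real k" using m_small k_ge by simp
  also have "\<dots> \<le> 2 ^ nat \<lceil>L\<rceil> * real k"
    using \<open>2 powr L \<le> 2 ^ nat \<lceil>L\<rceil>\<close> by (intro mult_right_mono) auto
  finally have "real (2 * m) \<le> real (2 ^ nat \<lceil>L\<rceil> * k)" by simp
  then show "2 * m \<le> 2 ^ nat \<lceil>L\<rceil> * k" by linarith
qed

lemma prob_radius_le:
  fixes L :: real
  assumes "even n" "8640 \<le> L" "2 powr (L + 1) \<le> real n"
    and T: "T \<subseteq> {..<n}" "card T = nat \<lfloor>real n / 2 powr L\<rfloor>"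
    and m: "m = nat \<lfloor>10 * real n / L\<rfloor>"
  shows "1 - 8640 / L \<le> measure_pmf.prob (random_graph n)
           {M. (\<exists>i. 2 * m \<le> card (ball n M T i)) \<and> real (LEAST i. 2 * m \<le> card (ball n M T i)) - 1 \<le> L}"
proof -
  note bounds = radius_parameter_bounds[OF assms(2,3) T(2) m]
  have "T \<noteq> {}" using bounds(1) by auto
  have "{M. expands_small_sets n M (2 * m)}
        \<subseteq> {M. (\<exists>i. 2 * m \<le> card (ball n M T i)) \<and> real (LEAST i. 2 * m \<le> card (ball n M T i)) - 1 \<le> L}"
  proof clarify
    fix M assume "expands_small_sets n M (2 * m)"
    note reached = Least_card_ball_le[OF this T(1) \<open>T \<noteq> {}\<close> bounds(3)]
    have "real (LEAST i. 2 * m \<le> card (ball n M T i)) - 1 \<le> L"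
      using reached(2) assms(2) by linarith
    then show "(\<exists>i. 2 * m \<le> card (ball n M T i)) \<and> real (LEAST i. 2 * m \<le> card (ball n M T i)) - 1 \<le> L"
      using reached(1) by blast
  qed
  then have "measure_pmf.prob (random_graph n) {M. expands_small_sets n M (2 * m)}
             \<le> measure_pmf.prob (random_graph n)
                 {M. (\<exists>i. 2 * m \<le> card (ball n M T i)) \<and> real (LEAST i. 2 * m \<le> card (ball n M T i)) - 1 \<le> L}"
    by (rule measure_pmf.finite_measure_mono) simp
  moreover have "1 - 2 * (216 * real (2 * m) / real n)
                 \<le> measure_pmf.prob (random_graph n) {M. expands_small_sets n M (2 * m)}"
    using assms(1) bounds(2,4) by (rule prob_expands_small_sets_ge)
  ultimately show ?thesis using bounds(5) by linarith
qed

lemma alpha_bounds: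
  assumes "0 < \<epsilon>" "\<epsilon> < 1"
  shows "0 < alpha \<epsilon>" "alpha \<epsilon> < 1"
proof -
  have "0 < log 2 5" by simp
  moreover have "0 < log 2 5 + 1 - \<epsilon>" "log 2 5 < log 2 5 + 1 - \<epsilon>"
    using \<open>0 < log 2 5\<close> assms by linarith+
  ultimately show "0 < alpha \<epsilon>" "alpha \<epsilon> < 1"
    unfolding alpha_def by simp_all
qed

lemma eventually_prob_radius_le:
  assumes "0 < \<epsilon>" "\<epsilon> < 1" "0 < \<delta>"
  shows "\<forall>\<^sub>F n in sequentially. even n \<longrightarrow>
           (\<forall>T. T \<subseteq> {..<n} \<and> card T = num_terminals \<epsilon> n \<longrightarrow>
              measure_pmf.prob (random_graph n)
                {M. (\<exists>i. card (ball n M T i) \<ge> 2 * m_param \<epsilon> n) \<and>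
                    real_of_int (r_param \<epsilon> n M T) \<le> (log 2 (real n)) powr alpha \<epsilon>}
              \<ge> 1 - \<delta>)"
proof -
  have \<alpha>: "0 < alpha \<epsilon>" "alpha \<epsilon> < 1" using alpha_bounds[OF assms(1,2)] by auto
  have "\<forall>\<^sub>F n in sequentially. 8640 \<le> log 2 (real n) powr alpha \<epsilon> \<and>
          8640 / \<delta> \<le> log 2 (real n) powr alpha \<epsilon> \<and> 2 powr (log 2 (real n) powr alpha \<epsilon> + 1) \<le> real n"
    using \<alpha> by (intro eventually_conj; real_asymp)
  then show ?thesis
  proof eventually_elim
    case (elim n)
    let ?L = "log 2 (real n) powr alpha \<epsilon>"
    have "0 < ?L" using elim by linarith
    then have \<delta>: "1 - \<delta> \<le> 1 - 8640 / ?L" using elim assms(3) by (simp add: field_simps)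
    show ?case
    proof (intro impI allI, elim conjE)
      fix T assume T: "even n" "T \<subseteq> {..<n}" "card T = num_terminals \<epsilon> n"
      have "1 - 8640 / ?L \<le> measure_pmf.prob (random_graph n)
              {M. (\<exists>i. 2 * m_param \<epsilon> n \<le> card (ball n M T i)) \<and>
                  real (LEAST i. 2 * m_param \<epsilon> n \<le> card (ball n M T i)) - 1 \<le> ?L}"
        using T elim by (intro prob_radius_le) (simp_all add: num_terminals_def m_param_def)
      with \<delta> show "1 - \<delta> \<le> measure_pmf.prob (random_graph n)
              {M. (\<exists>i. 2 * m_param \<epsilon> n \<le> card (ball n M T i)) \<and>
                  real_of_int (r_param \<epsilon> n M T) \<le> ?L}"
        unfolding r_param_def by simp
    qed
  qed
qed

theorem lemma3p4:
  shows "\<exists>\<epsilon>0>0. \<forall>\<epsilon>. 0 < \<epsilon> \<and> \<epsilon> < \<epsilon>0 \<longrightarrow>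
    (\<exists>C>0. \<forall>\<delta>>0. \<exists>N. \<forall>n\<ge>N. even n \<longrightarrow>
      (\<forall>T. T \<subseteq> {..<n} \<and> card T = num_terminals \<epsilon> n \<longrightarrow>
        measure_pmf.prob (random_graph n)
          {M. (\<exists>i. card (ball n M T i) \<ge> 2 * m_param \<epsilon> n) \<and>
              real_of_int (r_param \<epsilon> n M T) \<le> C * (log 2 (real n)) powr alpha \<epsilon>}
        \<ge> 1 - \<delta>))"
  by (intro exI[of _ "1::real"] conjI allI impI)
     (auto simp: eventually_sequentially dest: eventually_prob_radius_le)

end
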